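(* Let $\mathfrak S$ be a controlled Markov process and $\mathcal G$ its induced abstract $2\frac12$-player game graph (as described in the context). Let $v\in V_0$, $U\subseteq V_0$, and let $\pi_0$ be a deterministic memoryless strategy of Player 0 such that $\inf_{\pi_1}P_v^{\pi_0,\pi_1}(\mathcal G\models\lozenge U)=1$, the infimum over all Player 1 strategies $\pi_1$. Then the refinement $\rho$ of $\pi_0$ ensures $P_s^{\rho}(\mathfrak S\models\lozenge Q^{-1}(U))=1$ for every state $s\in v$.
   Context: CMP: $\mathfrak S=(\mathcal S,\mathcal U,T_{\mathfrak s})$ with $\mathcal S$ a Borel space, $\mathcal U$ finite, and $T_{\mathfrak s}(\cdot\mid s,u)$ a probability measure on the Borel sets of $\mathcal S$. A stationary policy is a universally measurable $\rho:\mathcal S\to\mathcal U$; $P_s^\rho$ is the induced measure on infinite paths from $s$ with $s^{k+1}\sim T_{\mathfrak s}(\cdot\mid s^k,\rho(s^k))$; $(\mathfrak S\models\lozenge A)$ is the set of paths visiting $A$. $\mathcal P=\langle B_1,\dots,B_\ell\rangle$ is a given measurable partition of $\mathcal S$. Abstraction: $\widehat{\mathcal S}$ is a finite partition of $\mathcal S$ into nonempty (measurable) cells each contained in a single $B_i$. $Q:\mathcal S\to\widehat{\mathcal S}$ maps $s$ to its cell; $Q^{-1}(\widehat U)=\bigcup_{\widehat s\in\widehat U}\widehat s$. Functions $\overline F,\underline F:\widehat{\mathcal S}\times\mathcal U\to2^{\widehat{\mathcal S}}$ satisfy $\overline F(\widehat s,u)\supseteq\{\widehat s'\mid\exists s\in\widehat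 s.\ T_{\mathfrak s}(\widehat s'\mid s,u)>0\}$ and $\underline F(\widehat s,u)\subseteq\{\widehat s'\mid\exists\varepsilon>0\ \forall s\in\widehat s.\ T_{\mathfrak s}(\widehat s'\mid s,u)\ge\varepsilon\}$. Game graph $\mathcal G=\langle V,E,\langle V_0,V_1,V_r\rangle\rangle$: $V_0=\widehat{\mathcal S}$, $V_1=\widehat{\mathcal S}\times\mathcal U$, $V_r=\bigcup_{v_1\in V_1}V_r(v_1)$ with $V_r(v_1)=\{v_r\subseteq\widehat{\mathcal S}\mid\underline F(v_1)\subseteq v_r\subseteq\overline F(v_1),\ 1\le|v_r|\le|\underline F(v_1)|+1\}$; $E(v_0)=\{(v_0,u)\mid u\in\mathcal U\}$, $E(v_1)=V_r(v_1)$, $E(v_r)=\{v_0\in V_0\mid v_0\in v_r\}$. Player 0 moves at $V_0$, Player 1 at $V_1$, uniformly random successor at $V_r$. Strategies $\pi_i:V^*V_i\to\mathit{Dist}(V)$ are supported on successors; a deterministic memoryless Player 0 strategy assigns each $v_0$ a single successor $\pi_0(v_0)=(v_0,u)$. $P_v^{\pi_0,\pi_1}$ is the induced measure on runs. A run of $\mathcal G$ satisfies a specification over $V_0$ (such as $\lozenge U$) iff its projection onto its subsequence of $V_0$-vertices does. Refinement: the refinement of a deterministic memoryless $\pi_0$ is $\rho$ with $\rho(s)=u$ whenever $s\in\widehat s$ and $\pi_0(\widehat s)=(\widehat s,u)$. *)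

theory Defs
  imports "HOL-Probability.Probability"
begin

text \<open>Cylinder probabilities: given history h (nonempty, current state last h),
  the probability that the next states lie successively in the sets As.\<close>
fun hist_cyl :: "('x list \<Rightarrow> 'x measure) \<Rightarrow> 'x list \<Rightarrow> 'x set list \<Rightarrow> ennreal" where
  "hist_cyl K h [] = 1"
| "hist_cyl K h (A # As) = (\<integral>\<^sup>+ x. indicator A x * hist_cyl K (h @ [x]) As \<partial>K h)"

fun path_cyl :: "('x list \<Rightarrow> 'x measure) \<Rightarrow> 'x \<Rightarrow> 'x set list \<Rightarrow> ennreal" where
  "path_cyl K x0 [] = 1"
| "path_cyl K x0 (A # As) = indicator A x0 * hist_cyl K [x0] As"

text \<open>P is the (unique) probability measure on infinite paths starting in x0 whose
  finite-dimensional distributions are those of the process x^{k+1} ~ K (x^0...x^k).\<close>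
definition is_path_measure ::
  "'x measure \<Rightarrow> ('x list \<Rightarrow> 'x measure) \<Rightarrow> 'x \<Rightarrow> 'x stream measure \<Rightarrow> bool" where
  "is_path_measure M K x0 P \<longleftrightarrow>
     prob_space P \<and> sets P = sets (stream_space M) \<and>
     (\<forall>As. set As \<subseteq> sets M \<longrightarrow>
        emeasure P {\<omega> \<in> space P. \<forall>i<length As. \<omega> !! i \<in> As ! i} = path_cyl K x0 As)"

text \<open>CMP (S,U,T): S a Borel space (type of class polish_space with its Borel sigma
  algebra), U a finite type, T a stochastic kernel.\<close>
definition is_cmp :: "('a::polish_space \<Rightarrow> 'u::finite \<Rightarrow> 'a measure) \<Rightarrow> bool" where
  "is_cmp T \<longleftrightarrow> (\<forall>u. (\<lambda>s. T s u) \<in> borel \<rightarrow>\<^sub>M prob_algebra borel)"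

definition cmp_path_measure ::
  "('a::polish_space \<Rightarrow> 'u \<Rightarrow> 'a measure) \<Rightarrow> ('a \<Rightarrow> 'u) \<Rightarrow> 'a \<Rightarrow> 'a stream measure \<Rightarrow> bool" where
  "cmp_path_measure T \<rho> s P \<longleftrightarrow> is_path_measure borel (\<lambda>h. T (last h) (\<rho> (last h))) s P"

definition measurable_partition :: "'a::topological_space set set \<Rightarrow> bool" where
  "measurable_partition C \<longleftrightarrow> finite C \<and> disjoint C \<and> \<Union>C = UNIV \<and> C \<subseteq> sets borel"

definition is_abstraction :: "'a::topological_space set set \<Rightarrow> 'a set set \<Rightarrow> bool" where
  "is_abstraction Bs C \<longleftrightarrow> measurable_partition C \<and> {} \<notin> C \<and> (\<forall>c\<in>C. \<exists>B\<in>Bs. c \<subseteq> B)"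

definition cell_of :: "'a set set \<Rightarrow> 'a \<Rightarrow> 'a set" where
  "cell_of C s = (THE c. c \<in> C \<and> s \<in> c)"

definition Qinv :: "'a set set \<Rightarrow> 'a set" where
  "Qinv U = \<Union>U"

definition F_over_ok ::
  "('a \<Rightarrow> 'u \<Rightarrow> 'a measure) \<Rightarrow> 'a set set \<Rightarrow> ('a set \<Rightarrow> 'u \<Rightarrow> 'a set set) \<Rightarrow> bool" where
  "F_over_ok T C Fo \<longleftrightarrow> (\<forall>c\<in>C. \<forall>u. Fo c u \<subseteq> C \<and>
      {c' \<in> C. \<exists>s\<in>c. measure (T s u) c' > 0} \<subseteq> Fo c u)"

definition F_under_ok ::
  "('a \<Rightarrow> 'u \<Rightarrow> 'a measure) \<Rightarrow> 'a set set \<Rightarrow> ('a set \<Rightarrow> 'u \<Rightarrow> 'a set set) \<Rightarrow> bool" where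
  "F_under_ok T C Fu \<longleftrightarrow> (\<forall>c\<in>C. \<forall>u.
      Fu c u \<subseteq> {c' \<in> C. \<exists>\<epsilon>>0. \<forall>s\<in>c. measure (T s u) c' \<ge> \<epsilon>})"

datatype ('a, 'u) gvtx = GV0 "'a set" | GV1 "'a set" 'u | GVr "'a set set"

definition Vr_of :: "'a set set \<Rightarrow> ('a set \<Rightarrow> 'u \<Rightarrow> 'a set set) \<Rightarrow> ('a set \<Rightarrow> 'u \<Rightarrow> 'a set set)
    \<Rightarrow> 'a set \<Rightarrow> 'u \<Rightarrow> 'a set set set" where
  "Vr_of C Fo Fu c u = {r. r \<subseteq> C \<and> Fu c u \<subseteq> r \<and> r \<subseteq> Fo c u \<and> 1 \<le> card r \<and> card r \<le> card (Fu c u) + 1}"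

fun game_edges :: "'a set set \<Rightarrow> ('a set \<Rightarrow> 'u \<Rightarrow> 'a set set) \<Rightarrow> ('a set \<Rightarrow> 'u \<Rightarrow> 'a set set)
    \<Rightarrow> ('a, 'u) gvtx \<Rightarrow> ('a, 'u) gvtx set" where
  "game_edges C Fo Fu (GV0 c) = {GV1 c u | u. True}"
| "game_edges C Fo Fu (GV1 c u) = GVr ` Vr_of C Fo Fu c u"
| "game_edges C Fo Fu (GVr r) = GV0 ` r"

definition p1_strategy :: "'a set set \<Rightarrow> ('a set \<Rightarrow> 'u \<Rightarrow> 'a set set) \<Rightarrow> ('a set \<Rightarrow> 'u \<Rightarrow> 'a set set)
    \<Rightarrow> (('a, 'u) gvtx list \<Rightarrow> ('a, 'u) gvtx pmf) \<Rightarrow> bool" where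
  "p1_strategy C Fo Fu \<pi>1 \<longleftrightarrow> (\<forall>h c u. h \<noteq> [] \<longrightarrow> last h = GV1 c u \<longrightarrow> c \<in> C \<longrightarrow>
      set_pmf (\<pi>1 h) \<subseteq> game_edges C Fo Fu (GV1 c u))"

text \<open>One step of the game: Player 0 plays the deterministic memoryless strategy
  sigma (pi_0(c) = (c, sigma c)), Player 1 plays pi1, random vertices are uniform.\<close>
fun game_step :: "('a set \<Rightarrow> 'u) \<Rightarrow> (('a, 'u) gvtx list \<Rightarrow> ('a, 'u) gvtx pmf)
    \<Rightarrow> ('a, 'u) gvtx list \<Rightarrow> ('a, 'u) gvtx pmf" where
  "game_step \<sigma> \<pi>1 h = (case last h of
       GV0 c \<Rightarrow> return_pmf (GV1 c (\<sigma> c))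
     | GV1 c u \<Rightarrow> \<pi>1 h
     | GVr r \<Rightarrow> pmf_of_set (GV0 ` r))"

definition game_measure :: "('a set \<Rightarrow> 'u) \<Rightarrow> (('a, 'u) gvtx list \<Rightarrow> ('a, 'u) gvtx pmf)
    \<Rightarrow> 'a set \<Rightarrow> ('a, 'u) gvtx stream measure \<Rightarrow> bool" where
  "game_measure \<sigma> \<pi>1 v P \<longleftrightarrow>
     is_path_measure (count_space UNIV) (\<lambda>h. measure_pmf (game_step \<sigma> \<pi>1 h)) (GV0 v) P"

definition refinement :: "'a set set \<Rightarrow> ('a set \<Rightarrow> 'u) \<Rightarrow> 'a \<Rightarrow> 'u" where
  "refinement C \<sigma> s = \<sigma> (cell_of C s)"

end

theory Submission
  imports Defs
begin

(* In the abstract game under sigma, let Attr be the attractor of U: the cells from which,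
   whatever Player 1 chooses, U is reached within a bounded number of rounds with positive
   probability.  Let Trap = C - Attr and let To_trap be the cells from which Fo-edges lead into
   Trap while avoiding U.  If v is in To_trap, Player 1 has a memoryless strategy that reaches
   Trap with positive probability and then keeps the play in Trap, hence away from U, so sigma
   would not win almost surely.  Hence v lies in Win = C - To_trap.  Win is closed under
   Fo-successors, hence almost surely under the concrete transitions, and Win is contained in
   some attr L.  As there are finitely many cells, the Fu-cells are hit with probability at least
   some eps > 0 uniformly, so from every state of Win the refined policy reaches Q^-1(U) within
   L + 1 steps with probability at least eps^L; iterating, the probability of avoiding Q^-1(U)
   decays geometrically. *)

lemma finite_uniform_lower_bound:
  fixes f :: "'i \<Rightarrow> 'x \<Rightarrow> real"
  assumes "finite I" and "\<And>i. i \<in> I \<Longrightarrow> \<exists>e>0. \<forall>x\<in>X i. e \<le> f i x"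
  obtains \<epsilon> where "0 < \<epsilon>" "\<epsilon> \<le> 1" "\<And>i x. i \<in> I \<Longrightarrow> x \<in> X i \<Longrightarrow> \<epsilon> \<le> f i x"
proof -
  have "\<exists>\<epsilon>>0. \<epsilon> \<le> 1 \<and> (\<forall>i\<in>I. \<forall>x\<in>X i. \<epsilon> \<le> f i x)"
    using assms
  proof (induction I rule: finite_induct)
    case empty
    show ?case by (intro exI[of _ 1]) simp
  next
    case (insert i I)
    obtain \<epsilon> where \<epsilon>: "0 < \<epsilon>" "\<epsilon> \<le> 1" "\<forall>j\<in>I. \<forall>x\<in>X j. \<epsilon> \<le> f j x"
      using insert by blast
    obtain e where e: "0 < e" "\<forall>x\<in>X i. e \<le> f i x"
      using insert.prems by blast
    show ?case
      using \<epsilon> e by (intro exI[of _ "min \<epsilon> e"]) (auto simp: min_le_iff_disj)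
  qed
  then show ?thesis
    using that by blast
qed

lemma (in prob_space) nn_integral_two_valued_bound:
  assumes "A \<in> events" and "0 \<le> a" and "a \<le> b" and "\<epsilon> \<le> prob A"
    and "AE x in M. f x \<le> ennreal (if x \<in> A then a else b)"
  shows "(\<integral>\<^sup>+x. f x \<partial>M) \<le> ennreal (b - (b - a) * \<epsilon>)"
proof -
  have "AE x in M. f x \<le> ennreal a * indicator A x + ennreal b * indicator (space M - A) x"
    using assms(5) AE_space by eventually_elim (auto simp: indicator_def)
  then have "(\<integral>\<^sup>+x. f x \<partial>M) \<le> (\<integral>\<^sup>+x. ennreal a * indicator A x + ennreal b * indicator (space M - A) x \<partial>M)"
    by (rule nn_integral_mono_AE)
  also have "\<dots> = ennreal a * emeasure M A + ennreal b * emeasure M (space M - A)"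
    using assms(1) by (simp add: nn_integral_add nn_integral_cmult_indicator)
  also have "\<dots> = ennreal (a * prob A + b * (1 - prob A))"
    using assms(2,3) by (simp add: emeasure_eq_measure prob_compl[OF assms(1)] ennreal_mult ennreal_plus[symmetric])
  also have "\<dots> \<le> ennreal (b - (b - a) * \<epsilon>)"
  proof (rule ennreal_leI)
    have "(b - a) * \<epsilon> \<le> (b - a) * prob A"
      using assms(3,4) by (intro mult_left_mono) auto
    then show "a * prob A + b * (1 - prob A) \<le> b - (b - a) * \<epsilon>"
      by (simp add: algebra_simps)
  qed
  finally show ?thesis .
qed

section \<open>Avoidance probabilities of Markov kernels\<close>

definition stay_prob :: "('x list \<Rightarrow> 'x measure) \<Rightarrow> 'x set \<Rightarrow> nat \<Rightarrow> 'x \<Rightarrow> ennreal" where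
  "stay_prob K B m x = path_cyl K x (replicate m B)"

locale markov_kernel =
  fixes \<kappa> :: "'x \<Rightarrow> 'x measure"
  assumes prob_space_kernel: "prob_space (\<kappa> x)"
begin

abbreviation stay :: "'x set \<Rightarrow> nat \<Rightarrow> 'x \<Rightarrow> ennreal" where
  "stay \<equiv> stay_prob (\<lambda>h. \<kappa> (last h))"

lemma emeasure_kernel_space [simp]: "emeasure (\<kappa> x) (space (\<kappa> x)) = 1"
  using prob_space.emeasure_space_1[OF prob_space_kernel] .

lemma hist_cyl_eq_nn_integral_path_cyl:
  "hist_cyl (\<lambda>h. \<kappa> (last h)) h As = (\<integral>\<^sup>+y. path_cyl (\<lambda>h. \<kappa> (last h)) y As \<partial>\<kappa> (last h))"
proof (induction As arbitrary: h)
  case (Cons A As)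
  show ?case
    by (simp add: Cons.IH[of "_ @ [_]"] Cons.IH[of "[_]"])
qed simp

lemma path_cyl_Cons:
  "path_cyl (\<lambda>h. \<kappa> (last h)) x (A # As) = indicator A x * (\<integral>\<^sup>+y. path_cyl (\<lambda>h. \<kappa> (last h)) y As \<partial>\<kappa> x)"
  using hist_cyl_eq_nn_integral_path_cyl[of "[x]"] by simp

lemma stay_0 [simp]: "stay B 0 x = 1"
  by (simp add: stay_prob_def)

lemma stay_Suc: "stay B (Suc m) x = indicator B x * (\<integral>\<^sup>+y. stay B m y \<partial>\<kappa> x)"
  by (simp only: stay_prob_def replicate_Suc path_cyl_Cons)

lemma stay_le_1: "stay B m x \<le> 1"
proof (induction m arbitrary: x)
  case (Suc m)
  have "(\<integral>\<^sup>+y. stay B m y \<partial>\<kappa> x) \<le> (\<integral>\<^sup>+y. 1 \<partial>\<kappa> x)"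
    by (intro nn_integral_mono Suc.IH)
  then show ?case
    by (simp add: stay_Suc indicator_def)
qed simp

lemma stay_Suc_le: "stay B (Suc m) x \<le> stay B m x"
proof (induction m arbitrary: x)
  case 0
  show ?case by (simp add: stay_Suc indicator_def)
next
  case (Suc m)
  have "(\<integral>\<^sup>+y. stay B (Suc m) y \<partial>\<kappa> x) \<le> (\<integral>\<^sup>+y. stay B m y \<partial>\<kappa> x)"
    by (intro nn_integral_mono Suc.IH)
  then show ?case
    by (simp only: stay_Suc[of B "Suc m"] stay_Suc[of B m]) (simp add: mult_left_mono)
qed

lemma stay_antimono: "m \<le> m' \<Longrightarrow> stay B m' x \<le> stay B m x"
  by (induction m' rule: dec_induct) (auto intro: order_trans[OF stay_Suc_le])

lemma stay_closed_eq_1: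
  assumes "S \<subseteq> B" and "\<And>x. x \<in> S \<Longrightarrow> AE y in \<kappa> x. y \<in> S" and "x \<in> S"
  shows "stay B m x = 1"
  using assms(3)
proof (induction m arbitrary: x)
  case (Suc m)
  have "(\<integral>\<^sup>+y. stay B m y \<partial>\<kappa> x) = (\<integral>\<^sup>+y. 1 \<partial>\<kappa> x)"
    using assms(2)[OF Suc.prems] by (intro nn_integral_cong_AE) (auto elim!: AE_mp simp: Suc.IH)
  then show ?case
    using Suc.prems assms(1) by (auto simp: stay_Suc)
qed simp

lemma stay_Suc_ge_singleton:
  assumes "x \<in> B" and "{y} \<in> sets (\<kappa> x)"
  shows "emeasure (\<kappa> x) {y} * stay B m y \<le> stay B (Suc m) x"
proof -
  have "emeasure (\<kappa> x) {y} * stay B m y = (\<integral>\<^sup>+z. stay B m y * indicator {y} z \<partial>\<kappa> x)"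
    using nn_integral_cmult_indicator[OF assms(2), of "stay B m y"] by (simp add: mult.commute)
  also have "\<dots> \<le> (\<integral>\<^sup>+z. stay B m z \<partial>\<kappa> x)"
    by (intro nn_integral_mono) (simp add: indicator_def)
  finally show ?thesis
    using assms(1) by (simp add: stay_Suc)
qed

end

lemma sets_stream_space_stay_in:
  assumes "B \<in> sets M"
  shows "{\<omega>\<in>space (stream_space M). \<forall>i<m. \<omega>!!i \<in> B} \<in> sets (stream_space M)"
    and "{\<omega>\<in>space (stream_space M). \<forall>i. \<omega>!!i \<in> B} \<in> sets (stream_space M)"
  using assms by measurable

lemma path_measure_always_eq_INF_stay_prob:
  assumes P: "is_path_measure M K x0 P" and B: "B \<in> sets M"
  shows "emeasure P {\<omega>\<in>space P. \<forall>i. \<omega>!!i \<in> B} = (INF m. stay_prob K B m x0)"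
proof -
  interpret prob_space P
    using P by (simp add: is_path_measure_def)
  have sets_P: "sets P = sets (stream_space M)"
    using P by (simp add: is_path_measure_def)
  define stays where "stays m = {\<omega>\<in>space P. \<forall>i<m. \<omega>!!i \<in> B}" for m
  have stays_sets: "stays m \<in> events" for m
    using sets_stream_space_stay_in(1)[OF B, of m]
    unfolding stays_def sets_P sets_eq_imp_space_eq[OF sets_P] .
  have stays_prob: "emeasure P (stays m) = stay_prob K B m x0" for m
  proof -
    have "set (replicate m B) \<subseteq> sets M"
      using B by (auto simp: in_set_replicate)
    then have "emeasure P {\<omega>\<in>space P. \<forall>i<length (replicate m B). \<omega>!!i \<in> replicate m B ! i}
        = path_cyl K x0 (replicate m B)"
      using P unfolding is_path_measure_def by blast
    then show ?thesis
      by (simp add: stays_def stay_prob_def)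
  qed
  have "{\<omega>\<in>space P. \<forall>i. \<omega>!!i \<in> B} = (\<Inter>m. stays m)"
    by (auto simp: stays_def)
  also have "emeasure P \<dots> = (INF m. emeasure P (stays m))"
  proof (rule INF_emeasure_decseq'[symmetric])
    show "decseq stays"
      unfolding decseq_def stays_def by auto
  qed (use stays_sets emeasure_finite in auto)
  finally show ?thesis
    by (simp add: stays_prob)
qed

lemma path_measure_reach_eq_1_iff:
  assumes P: "is_path_measure M K x0 P" and "space M = UNIV" and A: "A \<in> sets M"
  shows "emeasure P {\<omega>\<in>space P. \<exists>i. \<omega>!!i \<in> A} = 1 \<longleftrightarrow> (INF m. stay_prob K (-A) m x0) = 0"
proof -
  interpret prob_space P
    using P by (simp add: is_path_measure_def)
  define N where "N = {\<omega>\<in>space P. \<forall>i. \<omega>!!i \<in> -A}"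
  have "- A \<in> sets M"
    using A sets.compl_sets[OF A] \<open>space M = UNIV\<close> by (simp add: Compl_eq_Diff_UNIV)
  then have N: "emeasure P N = (INF m. stay_prob K (-A) m x0)"
    unfolding N_def by (rule path_measure_always_eq_INF_stay_prob[OF P])
  have sets_P: "sets P = sets (stream_space M)"
    using P by (simp add: is_path_measure_def)
  have "N \<in> events"
    using sets_stream_space_stay_in(2)[OF \<open>- A \<in> sets M\<close>]
    unfolding N_def sets_P sets_eq_imp_space_eq[OF sets_P] .
  have "{\<omega>\<in>space P. \<exists>i. \<omega>!!i \<in> A} = space P - N"
    by (auto simp: N_def)
  then have "emeasure P {\<omega>\<in>space P. \<exists>i. \<omega>!!i \<in> A} = 1 \<longleftrightarrow> prob N = 0"
    using prob_compl[OF \<open>N \<in> events\<close>] by (simp add: emeasure_eq_measure)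
  also have "\<dots> \<longleftrightarrow> emeasure P N = 0"
    by (simp add: emeasure_eq_measure)
  finally show ?thesis
    by (simp only: N)
qed

section \<open>Path measures of finite Markov chains\<close>

primcorec noise_run :: "('x \<Rightarrow> 'n \<Rightarrow> 'x) \<Rightarrow> 'x \<Rightarrow> 'n stream \<Rightarrow> 'x stream" where
  "noise_run F x \<xi> = x ## noise_run F (F x (shd \<xi>)) (stl \<xi>)"

lemma noise_run_Stream: "noise_run F x (t ## \<xi>) = x ## noise_run F (F x t) \<xi>"
  by (subst noise_run.code) simp

lemma measurable_noise_run:
  assumes "countable S" and "\<And>x t. F x t \<in> S"
  shows "noise_run F x \<in> stream_space (measure_pmf N) \<rightarrow>\<^sub>M stream_space (count_space UNIV)"
proof (rule measurable_stream_space2)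
  fix n
  show "(\<lambda>\<xi>. noise_run F x \<xi> !! n) \<in> stream_space (measure_pmf N) \<rightarrow>\<^sub>M count_space UNIV"
  proof (induction n arbitrary: x)
    case (Suc n)
    have "(\<lambda>\<xi>. noise_run F (F x (shd \<xi>)) (stl \<xi>) !! n) \<in> stream_space (measure_pmf N) \<rightarrow>\<^sub>M count_space UNIV"
    proof (rule measurable_compose_countable'[where f="\<lambda>y \<xi>. noise_run F y (stl \<xi>) !! n" and I=S])
      show "(\<lambda>\<xi>. F x (shd \<xi>)) \<in> stream_space (measure_pmf N) \<rightarrow>\<^sub>M count_space S"
        by (rule measurable_compose[OF measurable_shd]) (simp add: assms(2))
    qed (use measurable_compose[OF measurable_stl Suc.IH] assms(1) in auto)
    then show ?case
      by simp
  qed simp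
qed

lemma sets_stream_space_count_space_cylinder:
  "{\<omega> \<in> space (stream_space (count_space UNIV)). \<forall>i<length As. \<omega>!!i \<in> As!i}
     \<in> sets (stream_space (count_space UNIV))"
proof -
  have "Measurable.pred (stream_space (count_space UNIV)) (\<lambda>\<omega>. \<omega>!!i \<in> As!i)" for i
    by (rule pred_sets1[OF _ measurable_snth]) simp
  then have "Measurable.pred (stream_space (count_space UNIV)) (\<lambda>\<omega>. \<forall>i. i < length As \<longrightarrow> \<omega>!!i \<in> As!i)"
    by (intro pred_intros_countable pred_intros_imp')
  then show ?thesis
    unfolding pred_def .
qed

lemma emeasure_distr_noise_run_cylinder:
  fixes N :: "'n pmf" and \<kappa> :: "'x \<Rightarrow> 'x pmf"
  assumes "countable S" and F_S: "\<And>x t. F x t \<in> S"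
    and law: "\<And>x. x \<in> S \<Longrightarrow> map_pmf (F x) N = \<kappa> x" and "x \<in> S"
  defines "Ns \<equiv> stream_space (measure_pmf N)" and "SC \<equiv> stream_space (count_space UNIV)"
  shows "emeasure (distr Ns SC (noise_run F x)) {\<omega> \<in> space SC. \<forall>i<length As. \<omega>!!i \<in> As!i}
    = path_cyl (\<lambda>h. measure_pmf (\<kappa> (last h))) x As"
  using \<open>x \<in> S\<close>
proof (induction As arbitrary: x)
  interpret markov_kernel "\<lambda>x. measure_pmf (\<kappa> x)"
    by unfold_locales
  define cyl where "cyl As = {\<omega> \<in> space SC. \<forall>i<length As. \<omega>!!i \<in> As!i}" for As :: "'x set list"
  have meas: "noise_run F y \<in> Ns \<rightarrow>\<^sub>M SC" for y
    unfolding Ns_def SC_def using assms(1) F_S by (rule measurable_noise_run)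
  have cyl_sets: "cyl As \<in> sets SC" for As
    unfolding cyl_def SC_def by (rule sets_stream_space_count_space_cylinder)
  {
    case Nil
    have "prob_space (distr Ns SC (noise_run F x))"
      unfolding Ns_def
      by (rule prob_space.prob_space_distr[OF prob_space.prob_space_stream_space meas[unfolded Ns_def]])
        (rule prob_space_measure_pmf)
    then show ?case
      using prob_space.emeasure_space_1[OF \<open>prob_space (distr Ns SC (noise_run F x))\<close>] by simp
  next
    case (Cons A As)
    have preimage: "{\<xi> \<in> space Ns. t ## \<xi> \<in> noise_run F x -` cyl (A # As) \<inter> space Ns} =
        (if x \<in> A then noise_run F (F x t) -` cyl As \<inter> space Ns else {})" for t
      by (auto simp: cyl_def SC_def Ns_def space_stream_space noise_run_Stream nth_Cons' All_less_Suc2)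
    have "emeasure (distr Ns SC (noise_run F x)) (cyl (A # As))
        = emeasure Ns (noise_run F x -` cyl (A # As) \<inter> space Ns)"
      by (rule emeasure_distr[OF meas cyl_sets])
    also have "\<dots> = (\<integral>\<^sup>+t. emeasure Ns {\<xi> \<in> space Ns. t ## \<xi> \<in> noise_run F x -` cyl (A # As) \<inter> space Ns} \<partial>N)"
      unfolding Ns_def
      by (rule prob_space.emeasure_stream_space[OF prob_space_measure_pmf])
        (rule measurable_sets[OF meas[unfolded Ns_def] cyl_sets])
    also have "\<dots> = indicator A x * (\<integral>\<^sup>+t. emeasure (distr Ns SC (noise_run F (F x t))) (cyl As) \<partial>N)"
      unfolding preimage by (simp add: emeasure_distr[OF meas cyl_sets] indicator_def)
    also have "\<dots> = indicator A x * (\<integral>\<^sup>+y. path_cyl (\<lambda>h. measure_pmf (\<kappa> (last h))) y As \<partial>map_pmf (F x) N)"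
      using Cons.IH F_S by (simp add: cyl_def)
    also have "\<dots> = path_cyl (\<lambda>h. measure_pmf (\<kappa> (last h))) x (A # As)"
      by (simp only: law[OF Cons.prems] path_cyl_Cons)
    finally show ?case
      by (simp add: cyl_def)
  }
qed

lemma is_path_measure_noise_run:
  fixes N :: "'n pmf" and \<kappa> :: "'x \<Rightarrow> 'x pmf"
  assumes "countable S" and "\<And>x t. F x t \<in> S" and "x0 \<in> S"
    and "\<And>x. x \<in> S \<Longrightarrow> map_pmf (F x) N = \<kappa> x"
  shows "is_path_measure (count_space UNIV) (\<lambda>h. measure_pmf (\<kappa> (last h))) x0
           (distr (stream_space N) (stream_space (count_space UNIV)) (noise_run F x0))"
proof -
  have "prob_space (stream_space N)"
    by (rule prob_space.prob_space_stream_space) (rule prob_space_measure_pmf)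
  then show ?thesis
    using emeasure_distr_noise_run_cylinder[of S F N \<kappa> x0] measurable_noise_run[of S F x0 N] assms
    by (auto simp: is_path_measure_def prob_space.prob_space_distr)
qed

lemma finite_markov_chain_path_measure_exists:
  fixes \<kappa> :: "'x \<Rightarrow> 'x pmf"
  assumes "finite S" and "x0 \<in> S" and closed: "\<And>x. x \<in> S \<Longrightarrow> set_pmf (\<kappa> x) \<subseteq> S"
  shows "\<exists>P. is_path_measure (count_space UNIV) (\<lambda>h. measure_pmf (\<kappa> (last h))) x0 P"
proof -
  text \<open>Random mapping representation: the noise chooses a successor for every state at once.\<close>
  define F where "F x g = (if g x \<in> S then g x else x0)" for x and g :: "'x \<Rightarrow> 'x"
  have F_S: "F x g \<in> S" for x g
    using \<open>x0 \<in> S\<close> by (simp add: F_def)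
  have law: "map_pmf (F x) (Pi_pmf S x0 \<kappa>) = \<kappa> x" if "x \<in> S" for x
  proof -
    have "map_pmf (F x) (Pi_pmf S x0 \<kappa>)
        = map_pmf (\<lambda>y. if y \<in> S then y else x0) (map_pmf (\<lambda>g. g x) (Pi_pmf S x0 \<kappa>))"
      by (simp add: map_pmf_comp F_def[abs_def])
    also have "\<dots> = map_pmf (\<lambda>y. if y \<in> S then y else x0) (\<kappa> x)"
      using Pi_pmf_component[OF \<open>finite S\<close>, of x x0 \<kappa>] that by simp
    also have "\<dots> = map_pmf id (\<kappa> x)"
      using closed[OF that] by (intro map_pmf_cong) auto
    finally show ?thesis
      by simp
  qed
  have "is_path_measure (count_space UNIV) (\<lambda>h. measure_pmf (\<kappa> (last h))) x0
      (distr (stream_space (Pi_pmf S x0 \<kappa>)) (stream_space (count_space UNIV)) (noise_run F x0))"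
    by (rule is_path_measure_noise_run[of S F]) (simp_all add: countable_finite assms F_S law)
  then show ?thesis
    by blast
qed

section \<open>The abstraction of a controlled Markov process\<close>

locale cmp_abstraction =
  fixes T :: "'a::polish_space \<Rightarrow> 'u::finite \<Rightarrow> 'a measure"
    and C :: "'a set set"
    and Fo Fu :: "'a set \<Rightarrow> 'u \<Rightarrow> 'a set set"
  assumes cmp: "is_cmp T"
    and partition: "measurable_partition C"
    and cells_nonempty: "{} \<notin> C"
    and Fo_ok: "F_over_ok T C Fo"
    and Fu_ok: "F_under_ok T C Fu"
begin

lemma finite_cells: "finite C"
  using partition by (simp add: measurable_partition_def)

lemma cell_in_sets: "c \<in> C \<Longrightarrow> c \<in> sets borel"
  using partition by (auto simp: measurable_partition_def)

lemma ex_cell: "\<exists>c\<in>C. x \<in> c"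
  using partition by (auto simp: measurable_partition_def)

lemma cell_of_eq: "c \<in> C \<Longrightarrow> x \<in> c \<Longrightarrow> cell_of C x = c"
  using partition unfolding cell_of_def measurable_partition_def
  by (intro the_equality) (auto dest: disjointD)

lemma prob_space_T: "prob_space (T x u)" and sets_T [simp]: "sets (T x u) = sets borel"
proof -
  have "T x u \<in> space (prob_algebra borel)"
    using measurable_space[OF cmp[unfolded is_cmp_def, rule_format, of u]] by simp
  then show "prob_space (T x u)" "sets (T x u) = sets borel"
    by (auto simp: space_prob_algebra)
qed

lemma space_T [simp]: "space (T x u) = UNIV"
  using sets_eq_imp_space_eq[OF sets_T] by simp

lemma Fo_subset: "c \<in> C \<Longrightarrow> Fo c u \<subseteq> C"
  using Fo_ok by (simp add: F_over_ok_def)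

lemma Fu_subset: "c \<in> C \<Longrightarrow> Fu c u \<subseteq> C"
  using Fu_ok by (auto simp: F_under_ok_def)

lemma in_Fo_if_measure_pos:
  "c \<in> C \<Longrightarrow> c' \<in> C \<Longrightarrow> x \<in> c \<Longrightarrow> measure (T x u) c' > 0 \<Longrightarrow> c' \<in> Fo c u"
  using Fo_ok unfolding F_over_ok_def by blast

lemma Fu_lower_bound: "c \<in> C \<Longrightarrow> c' \<in> Fu c u \<Longrightarrow> \<exists>e>0. \<forall>x\<in>c. e \<le> measure (T x u) c'"
  using Fu_ok by (auto simp: F_under_ok_def)

lemma Fu_subset_Fo: "c \<in> C \<Longrightarrow> Fu c u \<subseteq> Fo c u"
proof
  fix c' assume "c \<in> C" and "c' \<in> Fu c u"
  then have "c' \<in> C"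
    using Fu_subset by blast
  obtain e where "e > 0" and e: "\<forall>x\<in>c. e \<le> measure (T x u) c'"
    using Fu_lower_bound[OF \<open>c \<in> C\<close> \<open>c' \<in> Fu c u\<close>] by blast
  obtain x where "x \<in> c"
    using \<open>c \<in> C\<close> cells_nonempty by (metis all_not_in_conv)
  with \<open>e > 0\<close> e have "measure (T x u) c' > 0"
    by (meson less_le_trans)
  then show "c' \<in> Fo c u"
    using in_Fo_if_measure_pos[OF \<open>c \<in> C\<close> \<open>c' \<in> C\<close> \<open>x \<in> c\<close>] by blast
qed

lemma AE_in_Fo: "c \<in> C \<Longrightarrow> x \<in> c \<Longrightarrow> AE y in T x u. y \<in> \<Union>(Fo c u)"
proof -
  assume "c \<in> C" "x \<in> c"
  interpret prob_space "T x u" by (rule prob_space_T)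
  have "c' \<in> null_sets (T x u)" if "c' \<in> C - Fo c u" for c'
    using that in_Fo_if_measure_pos[OF \<open>c \<in> C\<close> _ \<open>x \<in> c\<close>, of c' u] cell_in_sets[of c']
    by (auto simp: null_sets_def emeasure_eq_measure zero_less_measure_iff)
  then have "AE y in T x u. \<forall>c'\<in>C - Fo c u. y \<notin> c'"
    using finite_cells by (intro AE_finite_allI AE_not_in) auto
  then show ?thesis
    by eventually_elim (use ex_cell in blast)
qed

lemma Fo_nonempty: "c \<in> C \<Longrightarrow> Fo c u \<noteq> {}"
proof
  assume "c \<in> C" "Fo c u = {}"
  obtain x where "x \<in> c"
    using \<open>c \<in> C\<close> cells_nonempty by (metis all_not_in_conv)
  have "AE y in T x u. False"
    using AE_in_Fo[OF \<open>c \<in> C\<close> \<open>x \<in> c\<close>, of u] \<open>Fo c u = {}\<close> by simp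
  then show False
    using prob_space.AE_False[OF prob_space_T] by simp
qed

lemma insert_Fu_in_Vr: "c \<in> C \<Longrightarrow> c' \<in> Fo c u \<Longrightarrow> insert c' (Fu c u) \<in> Vr_of C Fo Fu c u"
  using Fo_subset[of c u] Fu_subset_Fo[of c u] finite_subset[OF Fu_subset finite_cells, of c u]
  by (auto simp: Vr_of_def card_insert_if Suc_le_eq card_gt_0_iff)

lemma Fu_in_Vr: "c \<in> C \<Longrightarrow> Fu c u \<noteq> {} \<Longrightarrow> Fu c u \<in> Vr_of C Fo Fu c u"
  using Fu_subset[of c u] Fu_subset_Fo[of c u] finite_subset[OF Fu_subset finite_cells, of c u]
  by (auto simp: Vr_of_def Suc_le_eq card_gt_0_iff)

lemma Vr_nonempty: "c \<in> C \<Longrightarrow> Vr_of C Fo Fu c u \<noteq> {}"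
  using Fo_nonempty[of c u] insert_Fu_in_Vr[of c _ u] by blast

lemma Vr_elem: "r \<in> Vr_of C Fo Fu c u \<Longrightarrow> r \<subseteq> C \<and> r \<noteq> {} \<and> finite r"
  by (auto simp: Vr_of_def intro: card_ge_0_finite)

end

locale reachability_game = cmp_abstraction T C Fo Fu
  for T :: "'a::polish_space \<Rightarrow> 'u::finite \<Rightarrow> 'a measure" and C Fo Fu +
  fixes U :: "'a set set" and \<sigma> :: "'a set \<Rightarrow> 'u"
  assumes target_cells: "U \<subseteq> C"
begin

text \<open>Every admissible choice of Player 1 at a cell of attr (Suc k) contains a cell of attr k:
  Fu c u lies in every choice, and if it is empty the choice is a single cell of Fo c u.\<close>
fun attr :: "nat \<Rightarrow> 'a set set" where
  "attr 0 = U"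
| "attr (Suc k) = attr k \<union> {c \<in> C. Fu c (\<sigma> c) \<inter> attr k \<noteq> {} \<or> (Fu c (\<sigma> c) = {} \<and> Fo c (\<sigma> c) \<subseteq> attr k)}"

definition Attr :: "'a set set" where
  "Attr = (\<Union>k. attr k)"

text \<open>From Trap, Player 1 can keep the play outside Attr forever; from To_trap, Player 1 can steer
  the play into Trap with positive probability while avoiding U.\<close>
definition Trap :: "'a set set" where
  "Trap = C - Attr"

fun to_trap :: "nat \<Rightarrow> 'a set set" where
  "to_trap 0 = Trap"
| "to_trap (Suc k) = to_trap k \<union> {c \<in> C - U. Fo c (\<sigma> c) \<inter> to_trap k \<noteq> {}}"

definition To_trap :: "'a set set" where
  "To_trap = (\<Union>k. to_trap k)"

definition Win :: "'a set set" where
  "Win = C - To_trap"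

lemma attr_mono: "k \<le> k' \<Longrightarrow> attr k \<subseteq> attr k'"
  by (induction k' rule: dec_induct) auto

lemma attr_subset: "attr k \<subseteq> C"
  using target_cells by (induction k) auto

lemma Attr_eq_attr: obtains L where "Attr = attr L"
proof -
  have "attr i \<subseteq> attr j \<or> attr j \<subseteq> attr i" for i j
    using attr_mono nat_le_linear by blast
  then have chain: "subset.chain UNIV (range attr)"
    unfolding subset.chain_def by blast
  have "Attr \<subseteq> C"
    using attr_subset by (auto simp: Attr_def)
  then have "finite Attr"
    using finite_cells finite_subset by blast
  then obtain A where "A \<in> range attr" "Attr \<subseteq> A"
    by (rule finite_subset_Union_chain[OF _ _ _ chain]) (auto simp: Attr_def)
  then show ?thesis
    using that by (auto simp: Attr_def)
qed

lemma Trap_cellD: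
  assumes "c \<in> Trap"
  shows "c \<in> C" "c \<notin> U" "Fu c (\<sigma> c) \<subseteq> Trap"
    and "Fu c (\<sigma> c) = {} \<Longrightarrow> \<exists>c'\<in>Fo c (\<sigma> c). c' \<in> Trap"
proof -
  obtain L where L: "Attr = attr L"
    by (rule Attr_eq_attr)
  have "c \<notin> Attr" "c \<in> C"
    using assms by (simp_all add: Trap_def)
  then have "c \<notin> attr (Suc L)"
    unfolding Attr_def by blast
  then have "Fu c (\<sigma> c) \<inter> attr L = {}" and "Fu c (\<sigma> c) = {} \<Longrightarrow> \<not> Fo c (\<sigma> c) \<subseteq> attr L"
    using \<open>c \<in> C\<close> by auto
  then show "c \<in> C" "c \<notin> U" "Fu c (\<sigma> c) \<subseteq> Trap"
    and "Fu c (\<sigma> c) = {} \<Longrightarrow> \<exists>c'\<in>Fo c (\<sigma> c). c' \<in> Trap"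
    using \<open>c \<in> C\<close> \<open>c \<notin> attr (Suc L)\<close> Fu_subset[of c "\<sigma> c"] Fo_subset[of c "\<sigma> c"] attr_mono[of 0 L]
    by (auto simp: Trap_def L)
qed

lemma to_trap_mono: "k \<le> k' \<Longrightarrow> to_trap k \<subseteq> to_trap k'"
  by (induction k' rule: dec_induct) auto

lemma to_trap_subset: "to_trap k \<subseteq> C"
  by (induction k) (auto simp: Trap_def)

lemma Win_closed:
  assumes "c \<in> Win" and "c \<notin> U"
  shows "Fo c (\<sigma> c) \<subseteq> Win"
proof
  fix c' assume c': "c' \<in> Fo c (\<sigma> c)"
  have "c' \<notin> to_trap k" for k
  proof
    assume "c' \<in> to_trap k"
    then have "c \<in> to_trap (Suc k)"
      using assms c' by (auto simp: Win_def)
    then show False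
      using assms(1) unfolding Win_def To_trap_def by blast
  qed
  then show "c' \<in> Win"
    using c' Fo_subset[of c "\<sigma> c"] assms(1) by (auto simp: Win_def To_trap_def)
qed

lemma Win_subset_attr: obtains L where "Win \<subseteq> attr L"
proof -
  obtain L where "Attr = attr L"
    by (rule Attr_eq_attr)
  moreover have "Trap \<subseteq> To_trap"
    by (metis To_trap_def UNIV_I UN_upper to_trap.simps(1))
  ultimately show ?thesis
    by (intro that[of L]) (auto simp: Win_def Trap_def)
qed

section \<open>Almost-sure reachability under the refined policy\<close>

sublocale cmp: markov_kernel "\<lambda>x. T x (refinement C \<sigma> x)"
  by (rule markov_kernel.intro) (rule prob_space_T)

lemma refinement_eq: "c \<in> C \<Longrightarrow> x \<in> c \<Longrightarrow> refinement C \<sigma> x = \<sigma> c"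
  by (simp add: refinement_def cell_of_eq)

lemma uniform_Fu_lower_bound:
  obtains \<epsilon> where "0 < \<epsilon>" "\<epsilon> \<le> 1"
    "\<And>c c' x. c \<in> C \<Longrightarrow> c' \<in> Fu c (\<sigma> c) \<Longrightarrow> x \<in> c \<Longrightarrow> \<epsilon> \<le> measure (T x (\<sigma> c)) c'"
proof -
  have "finite (Sigma C (\<lambda>c. Fu c (\<sigma> c)))"
    using finite_cells finite_subset[OF Fu_subset finite_cells] by blast
  then obtain \<epsilon> where "0 < \<epsilon>" "\<epsilon> \<le> 1"
    "\<And>p x. p \<in> Sigma C (\<lambda>c. Fu c (\<sigma> c)) \<Longrightarrow> x \<in> fst p \<Longrightarrow> \<epsilon> \<le> measure (T x (\<sigma> (fst p))) (snd p)"
    by (rule finite_uniform_lower_bound[where X=fst and f="\<lambda>p x. measure (T x (\<sigma> (fst p))) (snd p)"])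
      (auto dest: Fu_lower_bound)
  then show ?thesis
    using that by force
qed

lemma cmp_stay_Suc_le:
  assumes "c \<in> C" and "x \<in> c"
  shows "cmp.stay B (Suc m) x \<le> (\<integral>\<^sup>+y. cmp.stay B m y \<partial>T x (\<sigma> c))"
  using refinement_eq[OF assms] by (simp add: cmp.stay_Suc indicator_def)

context
  fixes \<epsilon> :: real
  assumes \<epsilon>_pos: "0 < \<epsilon>" and \<epsilon>_le_1: "\<epsilon> \<le> 1"
    and \<epsilon>_le_Fu: "\<And>c c' x. c \<in> C \<Longrightarrow> c' \<in> Fu c (\<sigma> c) \<Longrightarrow> x \<in> c \<Longrightarrow> \<epsilon> \<le> measure (T x (\<sigma> c)) c'"
begin

lemma attr_bound_mono: "0 \<le> \<beta> \<Longrightarrow> \<beta> * (1 - \<epsilon> ^ r) \<le> \<beta> * (1 - \<epsilon> ^ Suc r)"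
  using \<epsilon>_pos \<epsilon>_le_1 by (intro mult_left_mono) (auto simp: mult_left_le_one_le)

lemma nn_integral_round_bound:
  assumes "0 \<le> \<beta>" and c: "c \<in> attr (Suc r)" "c \<notin> attr r" and "x \<in> c"
    and bound: "\<And>y. y \<in> \<Union>(Fo c (\<sigma> c)) \<Longrightarrow> g y \<le> ennreal \<beta>"
    and bound_attr: "\<And>c' y. c' \<in> Fo c (\<sigma> c) \<Longrightarrow> c' \<in> attr r \<Longrightarrow> y \<in> c' \<Longrightarrow> g y \<le> ennreal (\<beta> * (1 - \<epsilon> ^ r))"
  shows "(\<integral>\<^sup>+y. g y \<partial>T x (\<sigma> c)) \<le> ennreal (\<beta> * (1 - \<epsilon> ^ Suc r))"
proof -
  interpret prob_space "T x (\<sigma> c)"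
    by (rule prob_space_T)
  have "c \<in> C"
    using c attr_subset by blast
  have AE_Fo: "AE y in T x (\<sigma> c). y \<in> \<Union>(Fo c (\<sigma> c))"
    by (rule AE_in_Fo[OF \<open>c \<in> C\<close> \<open>x \<in> c\<close>])
  from c \<open>c \<in> C\<close> consider (Fu) c' where "c' \<in> Fu c (\<sigma> c)" "c' \<in> attr r"
    | (Fo) "Fo c (\<sigma> c) \<subseteq> attr r"
    by auto
  then show ?thesis
  proof cases
    case Fu
    have "c' \<in> Fo c (\<sigma> c)" "c' \<in> C"
      using Fu Fu_subset_Fo[OF \<open>c \<in> C\<close>] Fo_subset[OF \<open>c \<in> C\<close>] by auto
    have "AE y in T x (\<sigma> c). g y \<le> ennreal (if y \<in> c' then \<beta> * (1 - \<epsilon> ^ r) else \<beta>)"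
      using AE_Fo by eventually_elim (auto intro: bound bound_attr[OF \<open>c' \<in> Fo c (\<sigma> c)\<close> Fu(2)])
    moreover have "\<beta> * (1 - \<epsilon> ^ r) \<le> \<beta>"
      using \<epsilon>_pos \<open>0 \<le> \<beta>\<close> by (simp add: mult_left_le)
    ultimately have "(\<integral>\<^sup>+y. g y \<partial>T x (\<sigma> c)) \<le> ennreal (\<beta> - (\<beta> - \<beta> * (1 - \<epsilon> ^ r)) * \<epsilon>)"
      using \<epsilon>_pos \<epsilon>_le_1 \<open>0 \<le> \<beta>\<close> cell_in_sets[OF \<open>c' \<in> C\<close>] \<epsilon>_le_Fu[OF \<open>c \<in> C\<close> Fu(1) \<open>x \<in> c\<close>]
      by (intro nn_integral_two_valued_bound) (auto simp: power_le_one)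
    then show ?thesis
      by (simp add: algebra_simps)
  next
    case Fo
    have "AE y in T x (\<sigma> c). g y \<le> ennreal (\<beta> * (1 - \<epsilon> ^ r))"
      using AE_Fo by eventually_elim (use Fo in \<open>auto intro: bound_attr\<close>)
    then have "(\<integral>\<^sup>+y. g y \<partial>T x (\<sigma> c)) \<le> (\<integral>\<^sup>+y. ennreal (\<beta> * (1 - \<epsilon> ^ r)) \<partial>T x (\<sigma> c))"
      by (rule nn_integral_mono_AE)
    also have "\<dots> = ennreal (\<beta> * (1 - \<epsilon> ^ r))"
      using emeasure_space_1 by simp
    finally show ?thesis
      using attr_bound_mono[OF \<open>0 \<le> \<beta>\<close>] by (meson ennreal_leI order_trans)
  qed
qed

text \<open>The bound is relative to a bound \<beta> on stay j, so that it can be iterated in blocks.\<close>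
lemma stay_attr_upper_bound:
  assumes "0 \<le> \<beta>" and bound: "\<And>y. y \<in> \<Union>Win \<Longrightarrow> cmp.stay (- Qinv U) j y \<le> ennreal \<beta>"
  shows "c \<in> Win \<Longrightarrow> c \<in> attr r \<Longrightarrow> x \<in> c \<Longrightarrow> r < n \<Longrightarrow>
    cmp.stay (- Qinv U) (j + n) x \<le> ennreal (\<beta> * (1 - \<epsilon> ^ r))"
proof (induction r arbitrary: c x n)
  case 0
  then obtain n' where "n = Suc n'"
    using less_imp_Suc_add by blast
  moreover have "x \<in> Qinv U"
    using 0 by (auto simp: Qinv_def)
  ultimately show ?case
    by (simp add: cmp.stay_Suc)
next
  case (Suc r)
  then obtain n' where n: "n = Suc n'" "r < n'"
    by (cases n) auto
  show ?case
  proof (cases "c \<in> attr r")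
    case True
    then have "cmp.stay (- Qinv U) (j + n) x \<le> ennreal (\<beta> * (1 - \<epsilon> ^ r))"
      using Suc.IH[OF Suc.prems(1) True Suc.prems(3), of n] Suc.prems(4) by simp
    then show ?thesis
      using attr_bound_mono[OF \<open>0 \<le> \<beta>\<close>] by (meson ennreal_leI order_trans)
  next
    case False
    have "c \<in> C" "c \<notin> U"
      using Suc.prems(1) False attr_mono[of 0 r] by (auto simp: Win_def)
    have Fo_Win: "Fo c (\<sigma> c) \<subseteq> Win"
      by (rule Win_closed[OF Suc.prems(1) \<open>c \<notin> U\<close>])
    have "cmp.stay (- Qinv U) (j + n) x \<le> (\<integral>\<^sup>+y. cmp.stay (- Qinv U) (j + n') y \<partial>T x (\<sigma> c))"
      using cmp_stay_Suc_le[OF \<open>c \<in> C\<close> Suc.prems(3)] by (simp add: n)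
    also have "\<dots> \<le> ennreal (\<beta> * (1 - \<epsilon> ^ Suc r))"
    proof (rule nn_integral_round_bound[OF \<open>0 \<le> \<beta>\<close> Suc.prems(2) False Suc.prems(3)])
      fix y assume "y \<in> \<Union>(Fo c (\<sigma> c))"
      then have "cmp.stay (- Qinv U) j y \<le> ennreal \<beta>"
        using Fo_Win bound by blast
      then show "cmp.stay (- Qinv U) (j + n') y \<le> ennreal \<beta>"
        using cmp.stay_antimono[of j "j + n'"] by (meson le_add1 order_trans)
    next
      fix c' y assume "c' \<in> Fo c (\<sigma> c)" "c' \<in> attr r" "y \<in> c'"
      then show "cmp.stay (- Qinv U) (j + n') y \<le> ennreal (\<beta> * (1 - \<epsilon> ^ r))"
        using Suc.IH[of c' y n'] Fo_Win n(2) by blast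
    qed
    finally show ?thesis .
  qed
qed

end

lemma stay_Win_decay:
  obtains q :: real and L where "0 \<le> q" "q < 1"
    "\<And>k x. x \<in> \<Union>Win \<Longrightarrow> cmp.stay (- Qinv U) (k * Suc L) x \<le> ennreal (q ^ k)"
proof -
  obtain \<epsilon> where \<epsilon>: "0 < \<epsilon>" "\<epsilon> \<le> 1"
    "\<And>c c' x. c \<in> C \<Longrightarrow> c' \<in> Fu c (\<sigma> c) \<Longrightarrow> x \<in> c \<Longrightarrow> \<epsilon> \<le> measure (T x (\<sigma> c)) c'"
    using uniform_Fu_lower_bound by blast
  obtain L where L: "Win \<subseteq> attr L"
    by (rule Win_subset_attr)
  define q where "q = 1 - \<epsilon> ^ L"
  have "0 \<le> q" "q < 1"
    using \<epsilon> by (auto simp: q_def power_le_one)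
  moreover have "\<forall>x\<in>\<Union>Win. cmp.stay (- Qinv U) (k * Suc L) x \<le> ennreal (q ^ k)" for k
  proof (induction k)
    case (Suc k)
    show ?case
    proof
      fix x assume "x \<in> \<Union>Win"
      then obtain c where "c \<in> Win" "x \<in> c"
        by blast
      have "cmp.stay (- Qinv U) (k * Suc L + Suc L) x \<le> ennreal (q ^ k * (1 - \<epsilon> ^ L))"
        by (rule stay_attr_upper_bound[OF \<epsilon>, where \<beta>="q ^ k" and j="k * Suc L"])
          (use Suc.IH \<open>c \<in> Win\<close> \<open>x \<in> c\<close> L \<open>0 \<le> q\<close> in auto)
      then show "cmp.stay (- Qinv U) (Suc k * Suc L) x \<le> ennreal (q ^ Suc k)"
        by (simp add: q_def add.commute mult.commute)
    qed
  qed (simp add: cmp.stay_le_1)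
  ultimately show ?thesis
    using that by blast
qed

lemma reach_prob_refinement_eq_1:
  assumes "v \<in> Win" and "s \<in> v" and "cmp_path_measure T (refinement C \<sigma>) s P"
  shows "emeasure P {\<omega> \<in> space P. \<exists>i. \<omega> !! i \<in> Qinv U} = 1"
proof -
  obtain q :: real and L where q: "0 \<le> q" "q < 1"
    and decay_Win: "\<And>k x. x \<in> \<Union>Win \<Longrightarrow> cmp.stay (- Qinv U) (k * Suc L) x \<le> ennreal (q ^ k)"
    using stay_Win_decay by blast
  have decay: "cmp.stay (- Qinv U) (k * Suc L) s \<le> ennreal (q ^ k)" for k
    using decay_Win assms(1,2) by blast
  have "(INF m. cmp.stay (- Qinv U) m s) \<le> 0"
  proof (rule ennreal_le_epsilon)
    fix d :: real assume "0 < d"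
    then obtain k where "q ^ k < d"
      using real_arch_pow_inv q by blast
    then have "(INF m. cmp.stay (- Qinv U) m s) \<le> ennreal d"
      using decay[of k] by (meson INF_lower2 UNIV_I ennreal_leI less_imp_le order_trans)
    then show "(INF m. cmp.stay (- Qinv U) m s) \<le> 0 + ennreal d"
      by simp
  qed
  moreover have "Qinv U \<in> sets borel"
    using target_cells finite_subset[OF target_cells finite_cells] cell_in_sets
    by (auto simp: Qinv_def intro: sets.finite_Union)
  ultimately show ?thesis
    using path_measure_reach_eq_1_iff[of borel _ s P "Qinv U"] assms(3)
    by (simp add: cmp_path_measure_def)
qed

section \<open>A spoiling strategy of Player 1\<close>

definition spoils :: "'a set \<Rightarrow> 'a set set \<Rightarrow> bool" where
  "spoils c r \<longleftrightarrow>
     (c \<in> Trap \<longrightarrow> r \<subseteq> Trap) \<and> (\<forall>k. c \<in> to_trap (Suc k) - to_trap k \<longrightarrow> r \<inter> to_trap k \<noteq> {})"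

definition spoiler_choice :: "'a set \<Rightarrow> 'u \<Rightarrow> 'a set set" where
  "spoiler_choice c u = (SOME r. r \<in> Vr_of C Fo Fu c u \<and> (u = \<sigma> c \<longrightarrow> spoils c r))"

lemma to_trap_entry_unique:
  assumes "c \<in> to_trap (Suc k) - to_trap k" and "c \<in> to_trap (Suc k') - to_trap k'"
  shows "k = k'"
  using assms to_trap_mono[of "Suc k" k'] to_trap_mono[of "Suc k'" k]
  by (cases k k' rule: linorder_cases) auto

lemma ex_spoiling_choice_Trap:
  assumes "c \<in> Trap"
  shows "\<exists>r. r \<in> Vr_of C Fo Fu c (\<sigma> c) \<and> spoils c r"
proof -
  have "Trap \<subseteq> to_trap k" for k
    using to_trap_mono[of 0 k] by simp
  then have no_entry: "\<forall>k. c \<notin> to_trap (Suc k) - to_trap k"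
    using assms by blast
  show ?thesis
  proof (cases "Fu c (\<sigma> c) = {}")
    case False
    have "spoils c (Fu c (\<sigma> c))"
      unfolding spoils_def using Trap_cellD(3)[OF assms] no_entry by blast
    then show ?thesis
      using Fu_in_Vr[OF Trap_cellD(1)[OF assms] False] by blast
  next
    case True
    obtain c' where "c' \<in> Fo c (\<sigma> c)" "c' \<in> Trap"
      using Trap_cellD(4)[OF assms True] by blast
    moreover have "spoils c (insert c' (Fu c (\<sigma> c)))"
      unfolding spoils_def using \<open>c' \<in> Trap\<close> True no_entry by blast
    ultimately show ?thesis
      using insert_Fu_in_Vr[OF Trap_cellD(1)[OF assms]] by blast
  qed
qed

lemma ex_spoiling_choice:
  assumes "c \<in> C"
  shows "\<exists>r. r \<in> Vr_of C Fo Fu c (\<sigma> c) \<and> spoils c r"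
proof (cases "c \<in> Trap")
  case True
  then show ?thesis
    by (rule ex_spoiling_choice_Trap)
next
  case False
  show ?thesis
  proof (cases "\<exists>k. c \<in> to_trap (Suc k) - to_trap k")
    case True
    then obtain k where k: "c \<in> to_trap (Suc k) - to_trap k"
      by blast
    then obtain c' where "c' \<in> Fo c (\<sigma> c)" "c' \<in> to_trap k"
      by auto
    then have "spoils c (insert c' (Fu c (\<sigma> c)))"
      using False to_trap_entry_unique[OF k] by (auto simp: spoils_def)
    then show ?thesis
      using insert_Fu_in_Vr[OF assms \<open>c' \<in> Fo c (\<sigma> c)\<close>] by blast
  next
    case False
    then show ?thesis
      unfolding spoils_def using Vr_nonempty[OF assms, of "\<sigma> c"] \<open>c \<notin> Trap\<close> by blast
  qed
qed

lemma spoiler_choice: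
  assumes "c \<in> C"
  shows "spoiler_choice c u \<in> Vr_of C Fo Fu c u" and "u = \<sigma> c \<Longrightarrow> spoils c (spoiler_choice c u)"
proof -
  have "\<exists>r. r \<in> Vr_of C Fo Fu c u \<and> (u = \<sigma> c \<longrightarrow> spoils c r)"
    using ex_spoiling_choice[OF assms] Vr_nonempty[OF assms] by (cases "u = \<sigma> c") auto
  from someI_ex[OF this] show "spoiler_choice c u \<in> Vr_of C Fo Fu c u"
    and "u = \<sigma> c \<Longrightarrow> spoils c (spoiler_choice c u)"
    by (simp_all add: spoiler_choice_def)
qed

definition spoiler_kernel :: "('a, 'u) gvtx \<Rightarrow> ('a, 'u) gvtx pmf" where
  "spoiler_kernel x = (case x of
      GV0 c \<Rightarrow> return_pmf (GV1 c (\<sigma> c))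
    | GV1 c u \<Rightarrow> return_pmf (GVr (spoiler_choice c u))
    | GVr r \<Rightarrow> pmf_of_set (GV0 ` r))"

abbreviation spoiler :: "('a, 'u) gvtx list \<Rightarrow> ('a, 'u) gvtx pmf" where
  "spoiler h \<equiv> spoiler_kernel (last h)"

lemma p1_strategy_spoiler: "p1_strategy C Fo Fu spoiler"
  using spoiler_choice(1) by (auto simp: p1_strategy_def spoiler_kernel_def)

lemma game_step_spoiler: "game_step \<sigma> spoiler h = spoiler_kernel (last h)"
  by (cases "last h") (simp_all add: spoiler_kernel_def)

sublocale game: markov_kernel "\<lambda>x. measure_pmf (spoiler_kernel x)"
  by (rule markov_kernel.intro) (rule prob_space_measure_pmf)

lemma ex_game_measure_spoiler:
  assumes "v \<in> C"
  shows "\<exists>P. game_measure \<sigma> spoiler v P"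
proof -
  define S :: "('a, 'u) gvtx set" where
    "S = GV0 ` C \<union> case_prod GV1 ` (C \<times> UNIV) \<union> GVr ` {r. r \<subseteq> C \<and> r \<noteq> {}}"
  have "finite {r. r \<subseteq> C \<and> r \<noteq> {}}"
    using finite_cells by (auto intro: finite_subset[of _ "Pow C"])
  then have "finite S"
    using finite_cells by (simp add: S_def)
  moreover have "GV0 v \<in> S"
    using assms by (simp add: S_def)
  moreover have "set_pmf (spoiler_kernel x) \<subseteq> S" if "x \<in> S" for x
  proof -
    from that consider (V0) c where "x = GV0 c" "c \<in> C" | (V1) c u where "x = GV1 c u" "c \<in> C"
      | (Vr) r where "x = GVr r" "r \<subseteq> C" "r \<noteq> {}"
      by (auto simp: S_def)
    then show ?thesis
    proof cases
      case (V1 c u)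
      then show ?thesis
        using spoiler_choice(1)[OF V1(2), of u] Vr_elem by (auto simp: S_def spoiler_kernel_def)
    next
      case (Vr r)
      then have "finite r"
        using finite_cells finite_subset by blast
      with Vr show ?thesis
        by (auto simp: S_def spoiler_kernel_def)
    qed (auto simp: S_def spoiler_kernel_def)
  qed
  ultimately have "\<exists>P. is_path_measure (count_space UNIV) (\<lambda>h. measure_pmf (spoiler_kernel (last h))) (GV0 v) P"
    by (rule finite_markov_chain_path_measure_exists)
  then show ?thesis
    unfolding game_measure_def game_step_spoiler .
qed

lemma stay_Trap_eq_1:
  assumes "c \<in> Trap"
  shows "game.stay (- GV0 ` U) m (GV0 c) = 1"
proof -
  define S :: "('a, 'u) gvtx set" where
    "S = GV0 ` Trap \<union> (\<lambda>c. GV1 c (\<sigma> c)) ` Trap \<union> GVr ` {r. r \<subseteq> Trap \<and> r \<noteq> {} \<and> finite r}"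
  have "S \<subseteq> - GV0 ` U"
    using Trap_cellD(2) by (auto simp: S_def)
  moreover have "AE y in measure_pmf (spoiler_kernel x). y \<in> S" if "x \<in> S" for x
    unfolding AE_measure_pmf_iff
  proof
    fix y assume y: "y \<in> set_pmf (spoiler_kernel x)"
    from \<open>x \<in> S\<close> consider (V0) c where "x = GV0 c" "c \<in> Trap" | (V1) c where "x = GV1 c (\<sigma> c)" "c \<in> Trap"
      | (Vr) r where "x = GVr r" "r \<subseteq> Trap" "r \<noteq> {}" "finite r"
      by (auto simp: S_def)
    then show "y \<in> S"
    proof cases
      case (V1 c)
      have "c \<in> C"
        using V1(2) by (rule Trap_cellD(1))
      then have "spoiler_choice c (\<sigma> c) \<subseteq> Trap" "spoiler_choice c (\<sigma> c) \<in> Vr_of C Fo Fu c (\<sigma> c)"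
        using spoiler_choice[of c "\<sigma> c"] V1(2) by (auto simp: spoils_def)
      then show ?thesis
        using y V1 Vr_elem by (auto simp: S_def spoiler_kernel_def)
    qed (use y in \<open>auto simp: S_def spoiler_kernel_def\<close>)
  qed
  ultimately show ?thesis
    using assms by (intro game.stay_closed_eq_1[of S]) (auto simp: S_def)
qed

lemma stay_round_lower_bound:
  assumes "c \<in> C" and "c \<notin> U" and "c' \<in> spoiler_choice c (\<sigma> c)"
  shows "ennreal (1 / card (spoiler_choice c (\<sigma> c))) * game.stay (- GV0 ` U) m (GV0 c')
    \<le> game.stay (- GV0 ` U) (Suc (Suc (Suc m))) (GV0 c)"
proof -
  define r where "r = spoiler_choice c (\<sigma> c)"
  have "finite r" "r \<noteq> {}"
    using spoiler_choice(1)[OF \<open>c \<in> C\<close>] Vr_elem by (auto simp: r_def)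
  then have "emeasure (measure_pmf (spoiler_kernel (GVr r))) {GV0 c'} = ennreal (1 / card r)"
    using assms(3) by (simp add: spoiler_kernel_def emeasure_pmf_single card_image inj_on_def r_def)
  then have "ennreal (1 / card r) * game.stay (- GV0 ` U) m (GV0 c')
      \<le> game.stay (- GV0 ` U) (Suc m) (GVr r)"
    using game.stay_Suc_ge_singleton[of "GVr r" "- GV0 ` U" "GV0 c'" m] by (simp add: image_iff)
  also have "\<dots> \<le> game.stay (- GV0 ` U) (Suc (Suc m)) (GV1 c (\<sigma> c))"
    using game.stay_Suc_ge_singleton[of "GV1 c (\<sigma> c)" "- GV0 ` U" "GVr r" "Suc m"]
    by (simp add: spoiler_kernel_def r_def emeasure_pmf_single image_iff)
  also have "\<dots> \<le> game.stay (- GV0 ` U) (Suc (Suc (Suc m))) (GV0 c)"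
    using game.stay_Suc_ge_singleton[of "GV0 c" "- GV0 ` U" "GV1 c (\<sigma> c)" "Suc (Suc m)"] \<open>c \<notin> U\<close>
    by (simp add: spoiler_kernel_def emeasure_pmf_single image_iff)
  finally show ?thesis
    by (simp add: r_def)
qed

lemma inverse_card_le_spoiler_choice:
  assumes "c \<in> C"
  shows "1 / real (card C) \<le> 1 / real (card (spoiler_choice c u))"
proof -
  have "spoiler_choice c u \<subseteq> C" "spoiler_choice c u \<noteq> {}"
    using Vr_elem[OF spoiler_choice(1)[OF assms]] by auto
  then have "card (spoiler_choice c u) \<le> card C" "card (spoiler_choice c u) > 0"
    using finite_cells by (auto simp: card_mono card_gt_0_iff finite_subset)
  then show ?thesis
    by (simp add: frac_le)
qed

lemma stay_to_trap_lower_bound: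
  "c \<in> to_trap k \<Longrightarrow> ennreal ((1 / card C) ^ k) \<le> game.stay (- GV0 ` U) m (GV0 c)"
proof (induction k arbitrary: c m)
  case 0
  then show ?case
    using stay_Trap_eq_1 by simp
next
  case (Suc k)
  have "c \<in> C"
    using Suc.prems to_trap_subset by blast
  then have "card C > 0"
    using finite_cells card_gt_0_iff by blast
  then have \<delta>_pow: "(1 / card C) ^ Suc k \<le> (1 / card C) ^ k"
    by (intro power_decreasing) (auto simp: divide_le_eq_1)
  show ?case
  proof (cases "c \<in> to_trap k")
    case True
    then show ?thesis
      using Suc.IH[of c m] \<delta>_pow by (meson ennreal_leI order_trans)
  next
    case False
    define r where "r = spoiler_choice c (\<sigma> c)"
    have "c \<notin> U" "c \<notin> Trap"
      using Suc.prems False to_trap_mono[of 0 k] by auto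
    then obtain c' where "c' \<in> r" "c' \<in> to_trap k"
      using spoiler_choice(2)[OF \<open>c \<in> C\<close> refl] Suc.prems False by (auto simp: spoils_def r_def)
    have "(1 / card C) ^ Suc k \<le> (1 / card r) * (1 / card C) ^ k"
      using mult_right_mono[OF inverse_card_le_spoiler_choice[OF \<open>c \<in> C\<close>], of "(1 / card C) ^ k"]
      by (simp add: r_def)
    then have "ennreal ((1 / card C) ^ Suc k) \<le> ennreal (1 / card r) * ennreal ((1 / card C) ^ k)"
      by (simp add: ennreal_mult[symmetric] ennreal_leI)
    also have "\<dots> \<le> ennreal (1 / card r) * game.stay (- GV0 ` U) (Suc (Suc (Suc m))) (GV0 c')"
      using Suc.IH[OF \<open>c' \<in> to_trap k\<close>] by (intro mult_left_mono) auto
    also have "\<dots> \<le> game.stay (- GV0 ` U) (Suc (Suc (Suc (Suc (Suc (Suc m)))))) (GV0 c)"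
      using stay_round_lower_bound[OF \<open>c \<in> C\<close> \<open>c \<notin> U\<close> \<open>c' \<in> r\<close>[unfolded r_def]] by (simp add: r_def)
    also have "\<dots> \<le> game.stay (- GV0 ` U) m (GV0 c)"
      by (rule game.stay_antimono) simp
    finally show ?thesis .
  qed
qed

lemma reach_prob_spoiler_neq_1:
  assumes "v \<in> To_trap" and "game_measure \<sigma> spoiler v P"
  shows "emeasure P {\<omega> \<in> space P. \<exists>i. \<omega> !! i \<in> GV0 ` U} \<noteq> 1"
proof -
  obtain k where "v \<in> to_trap k"
    using assms(1) by (auto simp: To_trap_def)
  then have "v \<in> C"
    using to_trap_subset by blast
  then have "0 < (1 / card C :: real) ^ k"
    using finite_cells card_gt_0_iff by (metis divide_pos_pos of_nat_0_less_iff zero_less_one zero_less_power empty_iff)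
  moreover have "ennreal ((1 / card C) ^ k) \<le> (INF m. game.stay (- GV0 ` U) m (GV0 v))"
    using stay_to_trap_lower_bound[OF \<open>v \<in> to_trap k\<close>] by (rule INF_greatest)
  ultimately have "(INF m. game.stay (- GV0 ` U) m (GV0 v)) \<noteq> 0"
    by (metis ennreal_eq_0_iff le_zero_eq not_le)
  then show ?thesis
    using path_measure_reach_eq_1_iff[of "count_space UNIV" _ "GV0 v" P "GV0 ` U"] assms(2)
    unfolding game_measure_def game_step_spoiler by simp
qed

end

theorem proposition2:
  fixes T :: "'a::polish_space \<Rightarrow> 'u::finite \<Rightarrow> 'a measure"
    and Bs C :: "'a set set"
    and Fo Fu :: "'a set \<Rightarrow> 'u \<Rightarrow> 'a set set"
    and v :: "'a set" and U :: "'a set set"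
    and \<sigma> :: "'a set \<Rightarrow> 'u"
  assumes "is_cmp T"
    and "measurable_partition Bs"
    and "is_abstraction Bs C"
    and "F_over_ok T C Fo"
    and "F_under_ok T C Fu"
    and "v \<in> C" and "U \<subseteq> C"
    and win: "\<forall>\<pi>1 P. p1_strategy C Fo Fu \<pi>1 \<longrightarrow> game_measure \<sigma> \<pi>1 v P \<longrightarrow>
               emeasure P {\<omega> \<in> space P. \<exists>i. \<omega> !! i \<in> GV0 ` U} = 1"
  shows "\<forall>s\<in>v. \<forall>P. cmp_path_measure T (refinement C \<sigma>) s P \<longrightarrow>
           emeasure P {\<omega> \<in> space P. \<exists>i. \<omega> !! i \<in> Qinv U} = 1"
proof -
  interpret reachability_game T C Fo Fu U \<sigma>
    using assms by (intro reachability_game.intro cmp_abstraction.intro reachability_game_axioms.intro)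
      (auto simp: is_abstraction_def)
  have "v \<notin> To_trap"
  proof
    assume "v \<in> To_trap"
    obtain P where "game_measure \<sigma> spoiler v P"
      using ex_game_measure_spoiler[OF \<open>v \<in> C\<close>] by blast
    then show False
      using win p1_strategy_spoiler reach_prob_spoiler_neq_1[OF \<open>v \<in> To_trap\<close>] by blast
  qed
  then have "v \<in> Win"
    using \<open>v \<in> C\<close> by (simp add: Win_def)
  then show ?thesis
    using reach_prob_refinement_eq_1 by blast
qed

end
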